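(* Let $d\ge1$, let $G$ be an $\mathcal{R}_d$-independent graph and let $G'$ be obtained from $G$ by applying a $(d+1)$-dimensional $X$-replacement or a $(d+1)$-dimensional $V$-replacement. Then $G'$ is $\mathcal{R}_{d+1}$-independent.
   Context: For a graph $G=(V,E)$ and a generic $p:V\to\mathbb{R}^d$ (coordinates algebraically independent over $\mathbb{Q}$), the rigidity matrix has a row for each $uv\in E$ with $p(u)-p(v)$ in the $d$ columns of $u$, $p(v)-p(u)$ in those of $v$, zeros elsewhere; $\mathcal{R}_d$ is its row matroid, with rank $r_d$. A graph with edge set $F$ is $\mathcal{R}_d$-independent if $r_d(F)=|F|$. For an integer $D\ge1$: a $D$-dimensional $X$-replacement takes two non-adjacent (vertex-disjoint) edges $uv,xy$ of $G$, deletes them, and adds a new vertex $w$ of degree $D+2$ adjacent to $u,v,x,y$ (and $D-2$ further existing vertices). A $D$-dimensional $V$-replacement takes two adjacent edges $xy,yz$ of $G$, deletes them, and adds a new vertex $w$ of degree $D+2$ adjacent to $x,y,z$ (and $D-1$ further existing vertices). *)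

theory Defs
  imports Complex_Main "HOL-Library.Poly_Mapping"
begin

definition simple_graph :: "'a set \<Rightarrow> 'a set set \<Rightarrow> bool" where
  "simple_graph V E \<longleftrightarrow> finite V \<and> (\<forall>e\<in>E. \<exists>u v. e = {u, v} \<and> u \<noteq> v \<and> u \<in> V \<and> v \<in> V)"

text \<open>A realization p : V -> R^d is given as p v i (i < d). It is generic if the
coordinates p v i, (v,i) in V x {0..<d}, are algebraically independent over Q:
no nonzero rational polynomial in the variables (v,i) vanishes at p.
Polynomials are finitely supported maps from monomials (finitely supported
exponent maps) to rationals.\<close>
type_synonym 'a monomial = "('a \<times> nat) \<Rightarrow>\<^sub>0 nat"
type_synonym 'a rat_poly = "'a monomial \<Rightarrow>\<^sub>0 rat"

definition generic :: "nat \<Rightarrow> 'a set \<Rightarrow> ('a \<Rightarrow> nat \<Rightarrow> real) \<Rightarrow> bool" where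
  "generic d V p \<longleftrightarrow>
     (\<forall>c :: 'a rat_poly.
        c \<noteq> 0 \<and> (\<forall>m\<in>Poly_Mapping.keys c. Poly_Mapping.keys m \<subseteq> V \<times> {..<d}) \<longrightarrow>
        (\<Sum>m\<in>Poly_Mapping.keys c. of_rat (Poly_Mapping.lookup c m) * (\<Prod>x\<in>Poly_Mapping.keys m. p (fst x) (snd x) ^ Poly_Mapping.lookup m x)) \<noteq> 0)"

text \<open>Entry of the rigidity matrix in row e (an edge) and column (x,i):
p(x)_i - p(y)_i if e = {x,y}, and 0 if x is not an endpoint of e.\<close>
definition rigidity_entry :: "('a \<Rightarrow> nat \<Rightarrow> real) \<Rightarrow> 'a set \<Rightarrow> 'a \<Rightarrow> nat \<Rightarrow> real" where
  "rigidity_entry p e x i = (if x \<in> e then (\<Sum>y\<in>e - {x}. p x i - p y i) else 0)"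

text \<open>R_d-independence: the rows of the rigidity matrix (columns indexed by V x {0..<d})
at a generic realization are linearly independent, i.e. r_d(E) = |E|.\<close>
definition rd_independent :: "nat \<Rightarrow> 'a set \<Rightarrow> 'a set set \<Rightarrow> bool" where
  "rd_independent d V E \<longleftrightarrow>
     (\<forall>p. generic d V p \<longrightarrow>
        (\<forall>c :: 'a set \<Rightarrow> real.
           (\<forall>x\<in>V. \<forall>i<d. (\<Sum>e\<in>E. c e * rigidity_entry p e x i) = 0) \<longrightarrow> (\<forall>e\<in>E. c e = 0)))"

definition X_replacement :: "nat \<Rightarrow> 'a set \<Rightarrow> 'a set set \<Rightarrow> 'a set \<Rightarrow> 'a set set \<Rightarrow> bool" where
  "X_replacement D V E V' E' \<longleftrightarrow>
     (\<exists>u v x y w N. {u, v} \<in> E \<and> {x, y} \<in> E \<and> {u, v} \<inter> {x, y} = {} \<and>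
        w \<notin> V \<and> N \<subseteq> V \<and> {u, v, x, y} \<subseteq> N \<and> card N = D + 2 \<and>
        V' = insert w V \<and>
        E' = (E - {{u, v}, {x, y}}) \<union> {{w, z} | z. z \<in> N})"

definition V_replacement :: "nat \<Rightarrow> 'a set \<Rightarrow> 'a set set \<Rightarrow> 'a set \<Rightarrow> 'a set set \<Rightarrow> bool" where
  "V_replacement D V E V' E' \<longleftrightarrow>
     (\<exists>x y z w N. {x, y} \<in> E \<and> {y, z} \<in> E \<and> x \<noteq> z \<and>
        w \<notin> V \<and> N \<subseteq> V \<and> {x, y, z} \<subseteq> N \<and> card N = D + 2 \<and>
        V' = insert w V \<and>
        E' = (E - {{x, y}, {y, z}}) \<union> {{w, t} | t. t \<in> N})"

end

theory Submission
  imports Defs Jordan_Normal_Form.Determinant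
begin

(* Both replacements yield a subgraph of the cone of G over the new vertex w, so it suffices
   that coning turns R_d-independence into R_(d+1)-independence (Whiteley).  Put w at the unit
   vector e_d and G into the hyperplane x_d = 0, keeping its first d coordinates generic.  Then
   the column (z, d) of the rigidity matrix meets only the cone edge wz, and the columns (x, i)
   with i < d reproduce the rigidity matrix of G; so the rows are independent at this special
   realization.  Independence transfers to every generic realization because the Gram
   determinant of the rows is a rational polynomial in the coordinates, and such a polynomial
   vanishes at a generic point only if it vanishes identically. *)

definition monomial_eval :: "'a monomial \<Rightarrow> ('a \<Rightarrow> nat \<Rightarrow> real) \<Rightarrow> real" where
  "monomial_eval m r = (\<Prod>x\<in>Poly_Mapping.keys m. r (fst x) (snd x) ^ Poly_Mapping.lookup m x)"

definition poly_eval :: "'a rat_poly \<Rightarrow> ('a \<Rightarrow> nat \<Rightarrow> real) \<Rightarrow> real" where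
  "poly_eval c r = (\<Sum>m\<in>Poly_Mapping.keys c. of_rat (Poly_Mapping.lookup c m) * monomial_eval m r)"

definition polynomial_fun :: "('a \<times> nat) set \<Rightarrow> (('a \<Rightarrow> nat \<Rightarrow> real) \<Rightarrow> real) \<Rightarrow> bool" where
  "polynomial_fun S f \<longleftrightarrow>
     (\<exists>c::'a rat_poly. (\<forall>m\<in>Poly_Mapping.keys c. Poly_Mapping.keys m \<subseteq> S) \<and> (\<forall>r. f r = poly_eval c r))"

lemma monomial_eval_superset:
  assumes "finite T" "Poly_Mapping.keys m \<subseteq> T"
  shows "monomial_eval m r = (\<Prod>x\<in>T. r (fst x) (snd x) ^ Poly_Mapping.lookup m x)"
  unfolding monomial_eval_def
  by (rule prod.mono_neutral_left) (use assms in \<open>auto simp: in_keys_iff\<close>)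

lemma monomial_eval_add: "monomial_eval (m1 + m2) r = monomial_eval m1 r * monomial_eval m2 r"
proof -
  let ?T = "Poly_Mapping.keys m1 \<union> Poly_Mapping.keys m2"
  have T: "finite ?T" by simp
  have "monomial_eval (m1 + m2) r = (\<Prod>x\<in>?T. r (fst x) (snd x) ^ Poly_Mapping.lookup (m1 + m2) x)"
    by (rule monomial_eval_superset[OF T keys_add])
  also have "\<dots> = (\<Prod>x\<in>?T. r (fst x) (snd x) ^ Poly_Mapping.lookup m1 x *
                            r (fst x) (snd x) ^ Poly_Mapping.lookup m2 x)"
    by (simp add: lookup_add power_add)
  also have "\<dots> = monomial_eval m1 r * monomial_eval m2 r"
    by (simp add: prod.distrib monomial_eval_superset[OF T])
  finally show ?thesis .
qed

lemma poly_eval_superset: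
  assumes "finite T" "Poly_Mapping.keys c \<subseteq> T"
  shows "poly_eval c r = (\<Sum>m\<in>T. of_rat (Poly_Mapping.lookup c m) * monomial_eval m r)"
  unfolding poly_eval_def
  by (rule sum.mono_neutral_left) (use assms in \<open>auto simp: in_keys_iff\<close>)

lemma polynomial_fun_monomial:
  assumes "Poly_Mapping.keys m \<subseteq> S"
  shows "polynomial_fun S (\<lambda>r. of_rat k * monomial_eval m r)"
  unfolding polynomial_fun_def
proof (intro exI[of _ "Poly_Mapping.single m k"] conjI allI)
  show "\<forall>m'\<in>Poly_Mapping.keys (Poly_Mapping.single m k). Poly_Mapping.keys m' \<subseteq> S"
    using assms by auto
  show "of_rat k * monomial_eval m r = poly_eval (Poly_Mapping.single m k) r" for r
    by (subst poly_eval_superset[of "{m}"]) auto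
qed

lemma polynomial_fun_const: "polynomial_fun S (\<lambda>r. of_rat k)"
  using polynomial_fun_monomial[of 0 S k] by (simp add: monomial_eval_def)

lemma polynomial_fun_var: "s \<in> S \<Longrightarrow> polynomial_fun S (\<lambda>r. r (fst s) (snd s))"
  using polynomial_fun_monomial[of "Poly_Mapping.single s 1" S 1] by (simp add: monomial_eval_def)

lemma polynomial_fun_add:
  assumes "polynomial_fun S f" "polynomial_fun S g"
  shows "polynomial_fun S (\<lambda>r. f r + g r)"
proof -
  obtain c1 where c1: "\<forall>m\<in>Poly_Mapping.keys c1. Poly_Mapping.keys m \<subseteq> S" "\<forall>r. f r = poly_eval c1 r"
    using assms(1) unfolding polynomial_fun_def by blast
  obtain c2 where c2: "\<forall>m\<in>Poly_Mapping.keys c2. Poly_Mapping.keys m \<subseteq> S" "\<forall>r. g r = poly_eval c2 r"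
    using assms(2) unfolding polynomial_fun_def by blast
  let ?T = "Poly_Mapping.keys c1 \<union> Poly_Mapping.keys c2"
  have T: "finite ?T" by simp
  have "poly_eval (c1 + c2) r = poly_eval c1 r + poly_eval c2 r" for r
    by (simp add: poly_eval_superset[OF T] poly_eval_superset[OF T keys_add]
        lookup_add of_rat_add distrib_right sum.distrib)
  moreover have "\<forall>m\<in>Poly_Mapping.keys (c1 + c2). Poly_Mapping.keys m \<subseteq> S"
    using c1(1) c2(1) keys_add[of c1 c2] by blast
  ultimately show ?thesis
    unfolding polynomial_fun_def using c1(2) c2(2) by metis
qed

lemma polynomial_fun_sum:
  assumes "finite A" "\<And>a. a \<in> A \<Longrightarrow> polynomial_fun S (f a)"
  shows "polynomial_fun S (\<lambda>r. \<Sum>a\<in>A. f a r)"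
  using assms
proof (induction A rule: finite_induct)
  case empty
  then show ?case using polynomial_fun_const[of S 0] by simp
next
  case (insert x F)
  then show ?case using polynomial_fun_add[of S "f x" "\<lambda>r. \<Sum>a\<in>F. f a r"] by simp
qed

lemma polynomial_fun_mult:
  assumes "polynomial_fun S f" "polynomial_fun S g"
  shows "polynomial_fun S (\<lambda>r. f r * g r)"
proof -
  obtain c1 where c1: "\<forall>m\<in>Poly_Mapping.keys c1. Poly_Mapping.keys m \<subseteq> S" "\<forall>r. f r = poly_eval c1 r"
    using assms(1) unfolding polynomial_fun_def by blast
  obtain c2 where c2: "\<forall>m\<in>Poly_Mapping.keys c2. Poly_Mapping.keys m \<subseteq> S" "\<forall>r. g r = poly_eval c2 r"
    using assms(2) unfolding polynomial_fun_def by blast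
  have expand: "f r * g r = (\<Sum>m1\<in>Poly_Mapping.keys c1. \<Sum>m2\<in>Poly_Mapping.keys c2.
      of_rat (Poly_Mapping.lookup c1 m1 * Poly_Mapping.lookup c2 m2) * monomial_eval (m1 + m2) r)" for r
    using c1(2) c2(2) by (simp add: poly_eval_def sum_product monomial_eval_add of_rat_mult mult_ac)
  have "polynomial_fun S (\<lambda>r. \<Sum>m1\<in>Poly_Mapping.keys c1. \<Sum>m2\<in>Poly_Mapping.keys c2.
      of_rat (Poly_Mapping.lookup c1 m1 * Poly_Mapping.lookup c2 m2) * monomial_eval (m1 + m2) r)"
  proof (intro polynomial_fun_sum polynomial_fun_monomial finite_keys)
    fix m1 m2 assume "m1 \<in> Poly_Mapping.keys c1" "m2 \<in> Poly_Mapping.keys c2"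
    then show "Poly_Mapping.keys (m1 + m2) \<subseteq> S" using c1(1) c2(1) keys_add[of m1 m2] by blast
  qed
  then show ?thesis unfolding expand .
qed

lemma polynomial_fun_prod:
  assumes "finite A" "\<And>a. a \<in> A \<Longrightarrow> polynomial_fun S (f a)"
  shows "polynomial_fun S (\<lambda>r. \<Prod>a\<in>A. f a r)"
  using assms
proof (induction A rule: finite_induct)
  case empty
  then show ?case using polynomial_fun_const[of S 1] by simp
next
  case (insert x F)
  then show ?case using polynomial_fun_mult[of S "f x" "\<lambda>r. \<Prod>a\<in>F. f a r"] by simp
qed

lemma polynomial_fun_diff:
  assumes "polynomial_fun S f" "polynomial_fun S g"
  shows "polynomial_fun S (\<lambda>r. f r - g r)"
  using polynomial_fun_add[OF assms(1) polynomial_fun_mult[OF polynomial_fun_const[of S "-1"] assms(2)]]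
  by simp

lemma generic_polynomial_fun_eq_0:
  assumes "generic D V q" "polynomial_fun (V \<times> {..<D}) f" "f q = 0"
  shows "f r = 0"
proof -
  obtain c where c: "\<forall>m\<in>Poly_Mapping.keys c. Poly_Mapping.keys m \<subseteq> V \<times> {..<D}"
      "\<forall>r. f r = poly_eval c r"
    using assms(2) unfolding polynomial_fun_def by blast
  have "c = 0"
  proof (rule ccontr)
    assume "c \<noteq> 0"
    then have "poly_eval c q \<noteq> 0"
      using assms(1) c(1) unfolding generic_def poly_eval_def monomial_eval_def by blast
    then show False using c(2) assms(3) by simp
  qed
  then show ?thesis using c(2) by (simp add: poly_eval_def)
qed

lemma generic_mono:
  assumes "generic D' V' q" "V \<subseteq> V'" "D \<le> D'"
  shows "generic D V q"
proof -
  have "V \<times> {..<D} \<subseteq> V' \<times> {..<D'}" using assms(2,3) by auto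
  then show ?thesis using assms(1) unfolding generic_def by (meson subset_trans)
qed

definition self_stress ::
    "nat \<Rightarrow> 'a set \<Rightarrow> 'a set set \<Rightarrow> ('a \<Rightarrow> nat \<Rightarrow> real) \<Rightarrow> ('a set \<Rightarrow> real) \<Rightarrow> bool" where
  "self_stress D V E p c \<longleftrightarrow> (\<forall>x\<in>V. \<forall>i<D. (\<Sum>e\<in>E. c e * rigidity_entry p e x i) = 0)"

definition rigidity_independent_at ::
    "nat \<Rightarrow> 'a set \<Rightarrow> 'a set set \<Rightarrow> ('a \<Rightarrow> nat \<Rightarrow> real) \<Rightarrow> bool" where
  "rigidity_independent_at D V E p \<longleftrightarrow> (\<forall>c. self_stress D V E p c \<longrightarrow> (\<forall>e\<in>E. c e = 0))"

lemma rd_independent_iff: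
  "rd_independent D V E \<longleftrightarrow> (\<forall>p. generic D V p \<longrightarrow> rigidity_independent_at D V E p)"
  unfolding rd_independent_def rigidity_independent_at_def self_stress_def by simp

lemma simple_graph_edge: "simple_graph V E \<Longrightarrow> e \<in> E \<Longrightarrow> finite e \<and> e \<subseteq> V"
  unfolding simple_graph_def by fastforce

lemma simple_graph_finite_edges:
  assumes "simple_graph V E"
  shows "finite E"
proof (rule finite_subset)
  show "E \<subseteq> Pow V" using simple_graph_edge[OF assms] by blast
  show "finite (Pow V)" using assms unfolding simple_graph_def by simp
qed

lemma rigidity_independent_at_subset:
  assumes "rigidity_independent_at D V E p" "E' \<subseteq> E" "finite E"
  shows "rigidity_independent_at D V E' p"
  unfolding rigidity_independent_at_def
proof (intro allI impI)
  fix c assume c: "self_stress D V E' p c"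
  define c' where "c' e = (if e \<in> E' then c e else 0)" for e
  have "(\<Sum>e\<in>E. c' e * rigidity_entry p e x i) = (\<Sum>e\<in>E'. c e * rigidity_entry p e x i)" for x i
    unfolding c'_def by (rule sum.mono_neutral_cong_right) (use assms(2,3) in auto)
  then have "self_stress D V E p c'" using c unfolding self_stress_def by simp
  then have "\<forall>e\<in>E. c' e = 0" using assms(1) unfolding rigidity_independent_at_def by blast
  then show "\<forall>e\<in>E'. c e = 0" using assms(2) unfolding c'_def by (metis subsetD)
qed

lemma rd_independent_subset:
  assumes "rd_independent D V E" "E' \<subseteq> E" "finite E"
  shows "rd_independent D V E'"
  using assms rigidity_independent_at_subset unfolding rd_independent_iff by blast

lemma rigidity_entry_cong:
  assumes "\<And>y. y \<in> insert x e \<Longrightarrow> p y i = p' y i"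
  shows "rigidity_entry p e x i = rigidity_entry p' e x i"
  using assms unfolding rigidity_entry_def by simp

lemma polynomial_fun_rigidity_entry:
  assumes "finite e" "e \<subseteq> V" "x \<in> V" "i < D"
  shows "polynomial_fun (V \<times> {..<D}) (\<lambda>r. rigidity_entry r e x i)"
proof -
  have "polynomial_fun (V \<times> {..<D}) (\<lambda>r. \<Sum>y\<in>e - {x}. r x i - r y i)"
    using assms by (intro polynomial_fun_sum polynomial_fun_diff polynomial_fun_var[of "(_, i)", simplified]) auto
  then show ?thesis
    unfolding rigidity_entry_def using polynomial_fun_const[of _ 0] by (cases "x \<in> e") simp_all
qed

definition rigidity_gram :: "nat \<Rightarrow> 'a set \<Rightarrow> ('a \<Rightarrow> nat \<Rightarrow> real) \<Rightarrow> 'a set \<Rightarrow> 'a set \<Rightarrow> real" where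
  "rigidity_gram D V p e f =
     (\<Sum>s\<in>V \<times> {..<D}. rigidity_entry p e (fst s) (snd s) * rigidity_entry p f (fst s) (snd s))"

definition rigidity_gram_mat ::
    "nat \<Rightarrow> 'a set \<Rightarrow> nat \<Rightarrow> (nat \<Rightarrow> 'a set) \<Rightarrow> ('a \<Rightarrow> nat \<Rightarrow> real) \<Rightarrow> real mat" where
  "rigidity_gram_mat D V n g p = mat n n (\<lambda>(i, j). rigidity_gram D V p (g i) (g j))"

lemma rigidity_gram_mat_carrier: "rigidity_gram_mat D V n g p \<in> carrier_mat n n"
  by (simp add: rigidity_gram_mat_def)

lemma polynomial_fun_det_rigidity_gram_mat:
  assumes "finite V" "\<And>j. j < n \<Longrightarrow> finite (g j) \<and> g j \<subseteq> V"
  shows "polynomial_fun (V \<times> {..<D}) (\<lambda>p. det (rigidity_gram_mat D V n g p))"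
proof -
  have entry: "polynomial_fun (V \<times> {..<D}) (\<lambda>p. rigidity_gram_mat D V n g p $$ (i, j))"
    if "i < n" "j < n" for i j
    unfolding rigidity_gram_mat_def rigidity_gram_def using that assms
    by (simp, intro polynomial_fun_sum polynomial_fun_mult polynomial_fun_rigidity_entry) auto
  have "polynomial_fun (V \<times> {..<D}) (\<lambda>p. \<Sum>\<pi> | \<pi> permutes {0..<n}.
          signof \<pi> * (\<Prod>i = 0..<n. rigidity_gram_mat D V n g p $$ (i, \<pi> i)))"
  proof (intro polynomial_fun_sum polynomial_fun_mult polynomial_fun_prod)
    fix \<pi> i assume "\<pi> \<in> {\<pi>. \<pi> permutes {0..<n}}" "i \<in> {0..<n}"
    then show "polynomial_fun (V \<times> {..<D}) (\<lambda>p. rigidity_gram_mat D V n g p $$ (i, \<pi> i))"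
      by (intro entry) (auto simp: permutes_in_image)
  qed (use polynomial_fun_const[of _ "of_int _"] in \<open>simp_all add: finite_permutations\<close>)
  then show ?thesis by (simp add: det_def'[OF rigidity_gram_mat_carrier])
qed

text \<open>The Gram matrix is \<open>R R\<^sup>T\<close> for the rigidity matrix \<open>R\<close>, and \<open>v\<^sup>T R R\<^sup>T v = |R\<^sup>T v|\<^sup>2\<close>.\<close>

lemma rigidity_gram_mat_mult_vec_eq_0_iff:
  assumes "finite V" "v \<in> carrier_vec n"
  shows "rigidity_gram_mat D V n g p *\<^sub>v v = 0\<^sub>v n \<longleftrightarrow>
    (\<forall>x\<in>V. \<forall>i<D. (\<Sum>j = 0..<n. v $ j * rigidity_entry p (g j) x i) = 0)"
proof -
  define u where "u s = (\<Sum>j = 0..<n. v $ j * rigidity_entry p (g j) (fst s) (snd s))" for s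
  have mult_vec: "(rigidity_gram_mat D V n g p *\<^sub>v v) $ k =
      (\<Sum>s\<in>V \<times> {..<D}. rigidity_entry p (g k) (fst s) (snd s) * u s)" if "k < n" for k
    using that assms(2)
    by (simp add: rigidity_gram_mat_def rigidity_gram_def scalar_prod_def u_def
        sum_distrib_left sum_distrib_right mult_ac sum.swap[of _ "V \<times> {..<D}"])
  have quadratic_form: "(\<Sum>k = 0..<n. v $ k * (rigidity_gram_mat D V n g p *\<^sub>v v) $ k) =
      (\<Sum>s\<in>V \<times> {..<D}. u s * u s)"
    by (simp add: mult_vec u_def sum_distrib_left sum_distrib_right mult_ac sum.swap[of _ "V \<times> {..<D}"])
  have "rigidity_gram_mat D V n g p *\<^sub>v v = 0\<^sub>v n \<longleftrightarrow> (\<forall>s\<in>V \<times> {..<D}. u s = 0)"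
  proof
    assume "rigidity_gram_mat D V n g p *\<^sub>v v = 0\<^sub>v n"
    then have "(\<Sum>s\<in>V \<times> {..<D}. u s * u s) = 0" by (simp flip: quadratic_form)
    then show "\<forall>s\<in>V \<times> {..<D}. u s = 0" using assms(1) by (simp add: sum_nonneg_eq_0_iff)
  next
    assume "\<forall>s\<in>V \<times> {..<D}. u s = 0"
    then show "rigidity_gram_mat D V n g p *\<^sub>v v = 0\<^sub>v n"
      by (intro eq_vecI) (auto simp: mult_vec carrier_matD[OF rigidity_gram_mat_carrier]
          simp del: index_mult_mat_vec intro!: sum.neutral)
  qed
  then show ?thesis unfolding u_def by auto
qed

lemma det_rigidity_gram_mat_eq_0_iff:
  assumes "finite V" "bij_betw g {0..<n} E"
  shows "det (rigidity_gram_mat D V n g p) = 0 \<longleftrightarrow> \<not> rigidity_independent_at D V E p"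
proof -
  let ?M = "rigidity_gram_mat D V n g p"
  have stress_iff: "self_stress D V E p c \<longleftrightarrow>
      (\<forall>x\<in>V. \<forall>i<D. (\<Sum>j = 0..<n. c (g j) * rigidity_entry p (g j) x i) = 0)" for c
  proof -
    have "(\<Sum>j = 0..<n. c (g j) * rigidity_entry p (g j) x i) = (\<Sum>e\<in>E. c e * rigidity_entry p e x i)"
      for x i by (rule sum.reindex_bij_betw[OF assms(2)])
    then show ?thesis unfolding self_stress_def by simp
  qed
  have "det ?M = 0 \<longleftrightarrow> (\<exists>v. v \<in> carrier_vec n \<and> v \<noteq> 0\<^sub>v n \<and> ?M *\<^sub>v v = 0\<^sub>v n)"
    by (rule det_0_iff_vec_prod_zero[OF rigidity_gram_mat_carrier])
  also have "\<dots> \<longleftrightarrow> (\<exists>c. self_stress D V E p c \<and> (\<exists>e\<in>E. c e \<noteq> 0))"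
  proof
    assume "\<exists>v. v \<in> carrier_vec n \<and> v \<noteq> 0\<^sub>v n \<and> ?M *\<^sub>v v = 0\<^sub>v n"
    then obtain v where v: "v \<in> carrier_vec n" "v \<noteq> 0\<^sub>v n" "?M *\<^sub>v v = 0\<^sub>v n" by blast
    define c where "c e = v $ the_inv_into {0..<n} g e" for e
    have c_g: "c (g j) = v $ j" if "j < n" for j
      using assms(2) that unfolding c_def bij_betw_def by (simp add: the_inv_into_f_f)
    have "self_stress D V E p c"
      using v(3) unfolding stress_iff rigidity_gram_mat_mult_vec_eq_0_iff[OF assms(1) v(1)]
      by (simp add: c_g)
    moreover obtain j where "j < n" "v $ j \<noteq> 0" using v(1,2) by (auto simp: vec_eq_iff)
    then have "g j \<in> E" "c (g j) \<noteq> 0" using assms(2) c_g by (auto dest: bij_betwE)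
    ultimately show "\<exists>c. self_stress D V E p c \<and> (\<exists>e\<in>E. c e \<noteq> 0)" by blast
  next
    assume "\<exists>c. self_stress D V E p c \<and> (\<exists>e\<in>E. c e \<noteq> 0)"
    then obtain c e where c: "self_stress D V E p c" "e \<in> E" "c e \<noteq> 0" by blast
    define v where "v = vec n (\<lambda>j. c (g j))"
    have v: "v \<in> carrier_vec n" unfolding v_def by simp
    moreover have "?M *\<^sub>v v = 0\<^sub>v n"
      using c(1) unfolding stress_iff rigidity_gram_mat_mult_vec_eq_0_iff[OF assms(1) v]
      by (simp add: v_def)
    moreover obtain j where "j < n" "g j = e" using assms(2) c(2) by (auto simp: bij_betw_def)
    then have "v \<noteq> 0\<^sub>v n" using c(3) unfolding v_def by (auto simp: vec_eq_iff)
    ultimately show "\<exists>v. v \<in> carrier_vec n \<and> v \<noteq> 0\<^sub>v n \<and> ?M *\<^sub>v v = 0\<^sub>v n" by blast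
  qed
  also have "\<dots> \<longleftrightarrow> \<not> rigidity_independent_at D V E p"
    unfolding rigidity_independent_at_def by blast
  finally show ?thesis .
qed

lemma rigidity_independent_at_generic:
  assumes "simple_graph V E" "generic D V q" "rigidity_independent_at D V E p"
  shows "rigidity_independent_at D V E q"
proof -
  have V: "finite V" using assms(1) unfolding simple_graph_def by simp
  obtain g where g: "bij_betw g {0..<card E} E"
    using ex_bij_betw_nat_finite[OF simple_graph_finite_edges[OF assms(1)]] by blast
  have "finite (g j) \<and> g j \<subseteq> V" if "j < card E" for j
    using simple_graph_edge[OF assms(1)] bij_betwE[OF g] that by simp
  then have "polynomial_fun (V \<times> {..<D}) (\<lambda>r. det (rigidity_gram_mat D V (card E) g r))"
    by (intro polynomial_fun_det_rigidity_gram_mat[OF V])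
  moreover have "det (rigidity_gram_mat D V (card E) g p) \<noteq> 0"
    using assms(3) det_rigidity_gram_mat_eq_0_iff[OF V g] by blast
  ultimately have "det (rigidity_gram_mat D V (card E) g q) \<noteq> 0"
    using generic_polynomial_fun_eq_0[OF assms(2)] by blast
  then show ?thesis using det_rigidity_gram_mat_eq_0_iff[OF V g] by blast
qed

definition cone_edges :: "'a \<Rightarrow> 'a set \<Rightarrow> 'a set set" where
  "cone_edges w V = {{w, z} | z. z \<in> V}"

definition cone_realization :: "nat \<Rightarrow> 'a \<Rightarrow> ('a \<Rightarrow> nat \<Rightarrow> real) \<Rightarrow> 'a \<Rightarrow> nat \<Rightarrow> real" where
  "cone_realization d w p v i =
     (if v = w then (if i = d then 1 else 0) else if i = d then 0 else p v i)"

lemma simple_graph_cone: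
  assumes "simple_graph V E" "w \<notin> V"
  shows "simple_graph (insert w V) (E \<union> cone_edges w V)"
  using assms unfolding simple_graph_def cone_edges_def by blast

lemma X_replacement_subset_cone:
  assumes "X_replacement D V E V' E'"
  shows "\<exists>w. w \<notin> V \<and> V' = insert w V \<and> E' \<subseteq> E \<union> cone_edges w V"
  using assms unfolding X_replacement_def cone_edges_def by blast

lemma V_replacement_subset_cone:
  assumes "V_replacement D V E V' E'"
  shows "\<exists>w. w \<notin> V \<and> V' = insert w V \<and> E' \<subseteq> E \<union> cone_edges w V"
  using assms unfolding V_replacement_def cone_edges_def by blast

lemma rigidity_entry_cone_realization_apex_coordinate:
  assumes "simple_graph V E" "w \<notin> V" "e \<in> E \<union> cone_edges w V" "z \<in> V"
  shows "rigidity_entry (cone_realization d w p) e z d = (if e = {w, z} then -1 else 0)"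
  using assms(3)
proof
  assume "e \<in> E"
  then have "w \<notin> e" using simple_graph_edge[OF assms(1)] assms(2) by blast
  then have "rigidity_entry (cone_realization d w p) e z d = rigidity_entry (\<lambda>_ _. 0) e z d"
    using assms(2,4) by (intro rigidity_entry_cong) (auto simp: cone_realization_def)
  moreover have "e \<noteq> {w, z}" using \<open>w \<notin> e\<close> by blast
  ultimately show ?thesis by (simp add: rigidity_entry_def)
next
  assume "e \<in> cone_edges w V"
  then obtain z' where e: "e = {w, z'}" "z' \<in> V" unfolding cone_edges_def by blast
  show ?thesis
  proof (cases "z' = z")
    case True
    then have "e - {z} = {w}" using e assms(2,4) by auto
    then show ?thesis using True e assms(2,4) by (auto simp: rigidity_entry_def cone_realization_def)
  next
    case False
    then show ?thesis using e assms(2,4) by (auto simp: rigidity_entry_def doubleton_eq_iff)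
  qed
qed

lemma cone_self_stress_cone_edge:
  assumes "simple_graph V E" "w \<notin> V" "z \<in> V"
    and "self_stress (Suc d) (insert w V) (E \<union> cone_edges w V) (cone_realization d w p) c"
  shows "c {w, z} = 0"
proof -
  let ?C = "E \<union> cone_edges w V"
  have C: "finite ?C" "{w, z} \<in> ?C"
    using simple_graph_finite_edges[OF simple_graph_cone[OF assms(1,2)]] assms(3)
    unfolding cone_edges_def by auto
  have "0 = (\<Sum>e\<in>?C. c e * rigidity_entry (cone_realization d w p) e z d)"
    using assms(3,4) unfolding self_stress_def by simp
  also have "\<dots> = (\<Sum>e\<in>?C. if e = {w, z} then - c e else 0)"
    using assms(1-3) by (intro sum.cong) (simp_all add: rigidity_entry_cone_realization_apex_coordinate)
  also have "\<dots> = - c {w, z}" using C by (simp add: sum.delta')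
  finally show ?thesis by simp
qed

lemma cone_self_stress_restrict:
  assumes "simple_graph V E" "w \<notin> V"
    and "self_stress (Suc d) (insert w V) (E \<union> cone_edges w V) (cone_realization d w p) c"
  shows "self_stress d V E p c"
  unfolding self_stress_def
proof (intro ballI allI impI)
  fix x i assume x: "x \<in> V" and i: "i < d"
  have "rigidity_entry (cone_realization d w p) e x i = rigidity_entry p e x i" if "e \<in> E" for e
    using simple_graph_edge[OF assms(1) that] x i assms(2)
    by (intro rigidity_entry_cong) (auto simp: cone_realization_def)
  then have "(\<Sum>e\<in>E. c e * rigidity_entry p e x i) =
      (\<Sum>e\<in>E \<union> cone_edges w V. c e * rigidity_entry (cone_realization d w p) e x i)"
    using simple_graph_finite_edges[OF simple_graph_cone[OF assms(1,2)]]
      cone_self_stress_cone_edge[OF assms(1,2) _ assms(3)]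
    by (intro sum.mono_neutral_cong_left) (auto simp: cone_edges_def)
  also have "\<dots> = 0" using assms(3) x i unfolding self_stress_def by simp
  finally show "(\<Sum>e\<in>E. c e * rigidity_entry p e x i) = 0" .
qed

lemma cone_rigidity_independent_at:
  assumes "simple_graph V E" "w \<notin> V" "rigidity_independent_at d V E p"
  shows "rigidity_independent_at (Suc d) (insert w V) (E \<union> cone_edges w V) (cone_realization d w p)"
  unfolding rigidity_independent_at_def
proof (intro allI impI)
  fix c assume c: "self_stress (Suc d) (insert w V) (E \<union> cone_edges w V) (cone_realization d w p) c"
  have "\<forall>e\<in>E. c e = 0"
    using assms(3) cone_self_stress_restrict[OF assms(1,2) c] unfolding rigidity_independent_at_def by blast
  moreover have "\<forall>e\<in>cone_edges w V. c e = 0"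
    using cone_self_stress_cone_edge[OF assms(1,2) _ c] unfolding cone_edges_def by blast
  ultimately show "\<forall>e\<in>E \<union> cone_edges w V. c e = 0" by blast
qed

lemma cone_rd_independent:
  assumes "simple_graph V E" "w \<notin> V" "rd_independent d V E"
  shows "rd_independent (Suc d) (insert w V) (E \<union> cone_edges w V)"
  unfolding rd_independent_iff
proof (intro allI impI)
  fix q assume q: "generic (Suc d) (insert w V) q"
  then have "generic d V q" by (rule generic_mono) auto
  then have "rigidity_independent_at d V E q" using assms(3) unfolding rd_independent_iff by blast
  then show "rigidity_independent_at (Suc d) (insert w V) (E \<union> cone_edges w V) q"
    using rigidity_independent_at_generic[OF simple_graph_cone[OF assms(1,2)] q]
      cone_rigidity_independent_at[OF assms(1,2)] by blast
qed

theorem corollary4p18: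
  fixes d :: nat and V V' :: "'a set" and E E' :: "'a set set"
  assumes "d \<ge> 1"
    and "simple_graph V E"
    and "rd_independent d V E"
    and "X_replacement (d + 1) V E V' E' \<or> V_replacement (d + 1) V E V' E'"
  shows "rd_independent (d + 1) V' E'"
proof -
  obtain w where w: "w \<notin> V" "V' = insert w V" "E' \<subseteq> E \<union> cone_edges w V"
    using assms(4) X_replacement_subset_cone V_replacement_subset_cone by blast
  have "rd_independent (Suc d) (insert w V) (E \<union> cone_edges w V)"
    by (rule cone_rd_independent[OF assms(2) w(1) assms(3)])
  then have "rd_independent (Suc d) (insert w V) E'"
    using w(3) simple_graph_finite_edges[OF simple_graph_cone[OF assms(2) w(1)]]
    by (rule rd_independent_subset)
  then show ?thesis using w(2) by simp
qed

end
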